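(* Let $R$ be a commutative ring with identity that is not an integral domain. If $\gamma_t(\Gamma(R))<\infty$ and $R$ is not isomorphic to $\mathbb{Z}_2\times D$ for any integral domain $D$, then $\gamma_t(\Gamma(R))=\gamma(\Gamma(R))$.
   Context: All rings are commutative with identity. The zero-divisor graph $\Gamma(R)$ has vertex set $Z(R)^*$ (nonzero zero-divisors); distinct $r,s$ are adjacent iff $rs=0$, and $x$ is adjacent to itself iff $x^2=0$. A dominating set is $X\subseteq Z(R)^*$ such that every vertex not in $X$ is adjacent to some element of $X$; a total dominating set is $X$ such that every vertex (including those in $X$) is adjacent to some element of $X$ (self-adjacency counts). $\gamma,\gamma_t$ are the respective minimum cardinalities. *)

theory Defs
  imports "HOL-Algebra.Algebra" "HOL-Library.Extended_Nat"
begin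

text \<open>Nonzero zero-divisors Z(R)^* of a commutative ring R (vertex set of the zero-divisor graph).\<close>
definition zd_star :: "('a, 'b) ring_scheme \<Rightarrow> 'a set" where
  "zd_star R = {x \<in> carrier R. x \<noteq> \<zero>\<^bsub>R\<^esub> \<and>
      (\<exists>y \<in> carrier R. y \<noteq> \<zero>\<^bsub>R\<^esub> \<and> x \<otimes>\<^bsub>R\<^esub> y = \<zero>\<^bsub>R\<^esub>)}"

text \<open>Adjacency in the zero-divisor graph: distinct r,s adjacent iff rs = 0; x adjacent to itself iff x^2 = 0.
  Both cases are captured by x y = 0.\<close>
definition zd_adj :: "('a, 'b) ring_scheme \<Rightarrow> 'a \<Rightarrow> 'a \<Rightarrow> bool" where
  "zd_adj R x y \<longleftrightarrow> x \<in> zd_star R \<and> y \<in> zd_star R \<and> x \<otimes>\<^bsub>R\<^esub> y = \<zero>\<^bsub>R\<^esub>"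

definition zd_dominating :: "('a, 'b) ring_scheme \<Rightarrow> 'a set \<Rightarrow> bool" where
  "zd_dominating R S \<longleftrightarrow> S \<subseteq> zd_star R \<and>
      (\<forall>v \<in> zd_star R. v \<notin> S \<longrightarrow> (\<exists>x \<in> S. zd_adj R v x))"

definition zd_total_dominating :: "('a, 'b) ring_scheme \<Rightarrow> 'a set \<Rightarrow> bool" where
  "zd_total_dominating R S \<longleftrightarrow> S \<subseteq> zd_star R \<and>
      (\<forall>v \<in> zd_star R. \<exists>x \<in> S. zd_adj R v x)"

text \<open>Domination numbers; \<infinity> if no finite (total) dominating set exists.\<close>
definition zd_gamma :: "('a, 'b) ring_scheme \<Rightarrow> enat" where
  "zd_gamma R = Inf {enat (card S) | S. finite S \<and> zd_dominating R S}"

definition zd_gamma_t :: "('a, 'b) ring_scheme \<Rightarrow> enat" where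
  "zd_gamma_t R = Inf {enat (card S) | S. finite S \<and> zd_total_dominating R S}"

end

theory Submission
  imports Defs
begin

text \<open>Every total dominating set dominates, so \<gamma> \<le> \<gamma>_t. Conversely, start from a minimum
  dominating set S and repeatedly exchange elements of S for products of them (and annihilators)
  so that the cardinality does not grow while the set of points of S with no neighbour in S
  strictly shrinks. Such an exchange exists whenever S has both isolated and non-isolated points,
  or some product of at most three isolated points vanishes, or two of them share an annihilator.
  When none exists, S is closed under multiplication with pq = p for all p, q in S, so S = {e}
  with e idempotent and every zero-divisor other than e annihilating e. Then eR = {0, e} and
  Ann(e) is a domain, so R \<cong> Z_2 \<times> Ann(e), which is excluded.\<close>

definition zd_isolated :: "('a, 'b) ring_scheme \<Rightarrow> 'a set \<Rightarrow> 'a set" where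
  "zd_isolated R S = {x \<in> S. \<forall>u \<in> S. x \<otimes>\<^bsub>R\<^esub> u \<noteq> \<zero>\<^bsub>R\<^esub>}"

definition zd_improves :: "('a, 'b) ring_scheme \<Rightarrow> 'a set \<Rightarrow> 'a set \<Rightarrow> bool" where
  "zd_improves R S' S \<longleftrightarrow> finite S' \<and> zd_dominating R S' \<and> card S' \<le> card S \<and>
     zd_isolated R S' \<subset> zd_isolated R S"

lemma zd_dominating_iff:
  "zd_dominating R S \<longleftrightarrow> S \<subseteq> zd_star R \<and>
     (\<forall>v \<in> zd_star R. v \<notin> S \<longrightarrow> (\<exists>x \<in> S. v \<otimes>\<^bsub>R\<^esub> x = \<zero>\<^bsub>R\<^esub>))"
  unfolding zd_dominating_def zd_adj_def by blast

lemma zd_total_dominating_iff: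
  "zd_total_dominating R S \<longleftrightarrow> zd_dominating R S \<and> zd_isolated R S = {}"
  unfolding zd_total_dominating_def zd_dominating_iff zd_isolated_def zd_adj_def by blast

lemma zd_gamma_le_gamma_t: "zd_gamma R \<le> zd_gamma_t R"
  unfolding zd_gamma_def zd_gamma_t_def zd_total_dominating_iff
  by (rule Inf_superset_mono) blast

lemma zd_gamma_t_le_card:
  "finite S \<Longrightarrow> zd_total_dominating R S \<Longrightarrow> zd_gamma_t R \<le> enat (card S)"
  unfolding zd_gamma_t_def by (rule Inf_lower) blast

lemma zd_gamma_attained:
  assumes "zd_gamma R < \<infinity>"
  obtains S where "finite S" "zd_dominating R S" "zd_gamma R = enat (card S)"
proof -
  let ?D = "{enat (card S) | S. finite S \<and> zd_dominating R S}"
  have "?D \<noteq> {}"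
  proof
    assume "?D = {}"
    then have "zd_gamma R = \<infinity>"
      unfolding zd_gamma_def by (simp only: Inf_empty top_enat_def)
    then show False
      using assms by simp
  qed
  then have "Inf ?D \<in> ?D"
    unfolding Inf_enat_def by (auto intro: LeastI)
  then show ?thesis
    using that unfolding zd_gamma_def by auto
qed

context cring
begin

lemma zd_starI:
  "x \<in> carrier R \<Longrightarrow> y \<in> carrier R \<Longrightarrow> x \<noteq> \<zero> \<Longrightarrow> y \<noteq> \<zero> \<Longrightarrow> x \<otimes> y = \<zero> \<Longrightarrow> x \<in> zd_star R"
  unfolding zd_star_def by auto

lemma zd_starD:
  assumes "x \<in> zd_star R"
  shows "x \<in> carrier R" "x \<noteq> \<zero>" "\<exists>y \<in> carrier R. y \<noteq> \<zero> \<and> x \<otimes> y = \<zero>"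
  using assms unfolding zd_star_def by auto

lemma zd_star_annihilator:
  assumes "x \<in> zd_star R" "y \<in> carrier R" "y \<noteq> \<zero>" "x \<otimes> y = \<zero>"
  shows "y \<in> zd_star R"
  using assms zd_starI[of y x] zd_starD[OF assms(1)] by (simp add: m_comm)

lemma zd_star_mult:
  assumes "x \<in> zd_star R" "c \<in> carrier R" "x \<otimes> c \<noteq> \<zero>"
  shows "x \<otimes> c \<in> zd_star R"
proof -
  obtain y where y: "y \<in> carrier R" "y \<noteq> \<zero>" "x \<otimes> y = \<zero>"
    using zd_starD[OF assms(1)] by auto
  have "(x \<otimes> c) \<otimes> y = (x \<otimes> y) \<otimes> c"
    using zd_starD(1)[OF assms(1)] y assms(2) by (simp add: m_ac)
  then show ?thesis
    using zd_starI[of "x \<otimes> c" y] y zd_starD(1)[OF assms(1)] assms by auto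
qed

lemma zd_star_subset_carrier: "zd_star R \<subseteq> carrier R"
  unfolding zd_star_def by auto

text \<open>Every removed element has a multiple among the added ones, and whatever annihilates an
  element annihilates its multiples; so domination survives, and no element of the new set
  becomes isolated that was not already isolated.\<close>
lemma zd_dominating_exchange:
  assumes fin: "finite S" and dom: "zd_dominating R S" and "A \<subseteq> S"
    and "finite B" and "B \<subseteq> zd_star R" and "card B \<le> card A"
    and removed_covered: "\<forall>r \<in> A. \<exists>u \<in> (S - A) \<union> B. r \<otimes> u = \<zero>"
    and multiples: "\<forall>r \<in> A. \<exists>a \<in> B. \<exists>c \<in> carrier R. a = r \<otimes> c"
    and added_covered: "\<forall>a \<in> B. \<exists>u \<in> (S - A) \<union> B. a \<otimes> u = \<zero>"
    and "A \<inter> zd_isolated R S \<noteq> {}"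
  shows "zd_improves R ((S - A) \<union> B) S"
proof -
  let ?S' = "(S - A) \<union> B"
  have SZ: "S \<subseteq> zd_star R"
    using dom unfolding zd_dominating_iff by auto
  have kill: "v \<otimes> r = \<zero> \<Longrightarrow> \<exists>a \<in> B. v \<otimes> a = \<zero>" if "v \<in> carrier R" "r \<in> A" for v r
  proof -
    obtain a c where "a \<in> B" "c \<in> carrier R" "a = r \<otimes> c"
      using multiples \<open>r \<in> A\<close> by blast
    moreover have "r \<in> carrier R"
      using \<open>r \<in> A\<close> \<open>A \<subseteq> S\<close> SZ zd_star_subset_carrier by auto
    ultimately show "v \<otimes> r = \<zero> \<Longrightarrow> ?thesis"
      using \<open>v \<in> carrier R\<close> by (metis m_assoc l_null)
  qed
  have "zd_dominating R ?S'"
    unfolding zd_dominating_iff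
  proof (intro conjI ballI impI)
    show "?S' \<subseteq> zd_star R"
      using SZ \<open>B \<subseteq> zd_star R\<close> by auto
    fix v assume v: "v \<in> zd_star R" "v \<notin> ?S'"
    show "\<exists>x \<in> ?S'. v \<otimes> x = \<zero>"
    proof (cases "v \<in> S")
      case True
      then show ?thesis using v removed_covered by auto
    next
      case False
      then obtain x where "x \<in> S" "v \<otimes> x = \<zero>"
        using dom v unfolding zd_dominating_iff by auto
      then show ?thesis
        using kill[of v x] v zd_starD(1) by (cases "x \<in> A") auto
    qed
  qed
  moreover have "card ?S' \<le> card S"
  proof -
    have "card ?S' \<le> card (S - A) + card B" by (rule card_Un_le)
    also have "card (S - A) = card S - card A"
      using \<open>A \<subseteq> S\<close> fin by (simp add: card_Diff_subset finite_subset)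
    finally show ?thesis
      using \<open>card B \<le> card A\<close> card_mono[OF fin \<open>A \<subseteq> S\<close>] by linarith
  qed
  moreover have "zd_isolated R ?S' \<subseteq> zd_isolated R S - A"
  proof
    fix x assume x: "x \<in> zd_isolated R ?S'"
    then have "x \<in> ?S'" and nx: "\<forall>u \<in> ?S'. x \<otimes> u \<noteq> \<zero>"
      unfolding zd_isolated_def by auto
    then have xS: "x \<in> S" "x \<notin> A"
      using added_covered by auto
    have "x \<otimes> u \<noteq> \<zero>" if "u \<in> S" for u
      using nx kill[of x u] that xS SZ zd_starD(1) by (cases "u \<in> A") auto
    then show "x \<in> zd_isolated R S - A"
      using xS unfolding zd_isolated_def by auto
  qed
  ultimately show ?thesis
    unfolding zd_improves_def using \<open>A \<inter> zd_isolated R S \<noteq> {}\<close> fin \<open>finite B\<close> by blast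
qed

lemma improvement_from_nonisolated:
  assumes fin: "finite S" and dom: "zd_dominating R S"
    and b: "b \<in> zd_isolated R S" and s: "s \<in> S" "s \<notin> zd_isolated R S"
  shows "\<exists>S'. zd_improves R S' S"
proof -
  have SZ: "S \<subseteq> zd_star R"
    using dom unfolding zd_dominating_iff by auto
  have bS: "b \<in> S" and b_isol: "\<forall>u \<in> S. b \<otimes> u \<noteq> \<zero>"
    using b unfolding zd_isolated_def by auto
  obtain t where t: "t \<in> S" "s \<otimes> t = \<zero>"
    using s unfolding zd_isolated_def by auto
  have bc: "b \<in> carrier R" and sc: "s \<in> carrier R"
    using bS s SZ zd_star_subset_carrier by auto
  obtain y where y: "y \<in> carrier R" "y \<noteq> \<zero>" "b \<otimes> y = \<zero>"
    using zd_starD(3)[of b] bS SZ by auto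
  have yZ: "y \<in> zd_star R"
    using zd_star_annihilator[of b y] y bS SZ by auto
  have bsZ: "b \<otimes> s \<in> zd_star R"
    using zd_star_mult[of b s] b_isol bS SZ s sc by auto
  have bsy: "(b \<otimes> s) \<otimes> y = \<zero>"
    using y bc sc by (metis m_assoc m_comm r_null)
  have s_covered: "\<exists>u \<in> S - {b, s} \<union> {b \<otimes> s, y}. s \<otimes> u = \<zero>"
  proof (cases "t = s")
    case True
    have "s \<otimes> (b \<otimes> s) = b \<otimes> (s \<otimes> s)"
      using sc bc by (simp add: m_ac)
    then show ?thesis
      using t True bc by auto
  next
    case False
    moreover have "t \<noteq> b"
      using t b_isol s sc bc by (auto simp: m_comm)
    ultimately show ?thesis
      using t by auto
  qed
  have "zd_improves R (S - {b, s} \<union> {b \<otimes> s, y}) S"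
  proof (rule zd_dominating_exchange[OF fin dom])
    show "card {b \<otimes> s, y} \<le> card {b, s}"
      using b s by (auto simp: card_insert_if)
    show "\<forall>r \<in> {b, s}. \<exists>u \<in> S - {b, s} \<union> {b \<otimes> s, y}. r \<otimes> u = \<zero>"
      using y s_covered by auto
    show "\<forall>r \<in> {b, s}. \<exists>a \<in> {b \<otimes> s, y}. \<exists>c \<in> carrier R. a = r \<otimes> c"
      using bc sc m_comm[OF bc sc] by blast
    show "\<forall>a \<in> {b \<otimes> s, y}. \<exists>u \<in> S - {b, s} \<union> {b \<otimes> s, y}. a \<otimes> u = \<zero>"
      using bsy y bc sc by (auto simp: m_comm)
  qed (use bS s b bsZ yZ in auto)
  then show ?thesis ..
qed

lemma improvement_from_square_product:
  assumes fin: "finite S" and dom: "zd_dominating R S"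
    and x: "x \<in> zd_isolated R S" and z: "z \<in> carrier R" "x \<otimes> x \<otimes> z = \<zero>" "x \<otimes> z \<noteq> \<zero>"
  shows "\<exists>S'. zd_improves R S' S"
proof -
  have xZ: "x \<in> zd_star R" and xS: "x \<in> S"
    using x dom unfolding zd_isolated_def zd_dominating_iff by auto
  have xc: "x \<in> carrier R"
    using xZ zd_starD(1) by auto
  have "(x \<otimes> z) \<otimes> (x \<otimes> z) = (x \<otimes> x \<otimes> z) \<otimes> z"
    using xc z(1) by (simp add: m_ac)
  then have square: "(x \<otimes> z) \<otimes> (x \<otimes> z) = \<zero>"
    using z xc by simp
  have "x \<otimes> (x \<otimes> z) = \<zero>"
    using z xc by (simp add: m_assoc)
  then have "zd_improves R (S - {x} \<union> {x \<otimes> z}) S"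
  proof (intro zd_dominating_exchange[OF fin dom])
    show "\<forall>a \<in> {x \<otimes> z}. \<exists>u \<in> S - {x} \<union> {x \<otimes> z}. a \<otimes> u = \<zero>"
      using square by blast
  qed (use zd_star_mult[OF xZ z(1,3)] xS x z(1) in auto)
  then show ?thesis ..
qed

lemma improvement_from_triple_product:
  assumes fin: "finite S" and dom: "zd_dominating R S"
    and isol: "p \<in> zd_isolated R S" "q \<in> zd_isolated R S" "w \<in> zd_isolated R S"
    and distinct: "p \<noteq> q" "p \<noteq> w" "q \<noteq> w" and pqw: "p \<otimes> q \<otimes> w = \<zero>"
  shows "\<exists>S'. zd_improves R S' S"
proof -
  have S: "p \<in> S" "q \<in> S" "w \<in> S" and nz: "p \<otimes> q \<noteq> \<zero>" "q \<otimes> w \<noteq> \<zero>" "w \<otimes> p \<noteq> \<zero>"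
    using isol unfolding zd_isolated_def by auto
  have Z: "p \<in> zd_star R" "q \<in> zd_star R" "w \<in> zd_star R"
    using S dom unfolding zd_dominating_iff by auto
  have c: "p \<in> carrier R" "q \<in> carrier R" "w \<in> carrier R"
    using Z zd_starD(1) by auto
  have prod_zero: "a \<otimes> b = \<zero>" if "a \<otimes> b = (p \<otimes> q \<otimes> w) \<otimes> d" "d \<in> carrier R" for a b d
    using that pqw by simp
  have "p \<otimes> (q \<otimes> w) = \<zero>" "q \<otimes> (w \<otimes> p) = \<zero>" "w \<otimes> (p \<otimes> q) = \<zero>"
    using pqw c by (simp_all add: m_ac)
  moreover have "(p \<otimes> q) \<otimes> (q \<otimes> w) = \<zero>" "(q \<otimes> w) \<otimes> (w \<otimes> p) = \<zero>" "(w \<otimes> p) \<otimes> (p \<otimes> q) = \<zero>"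
    by (rule prod_zero; use c in \<open>simp add: m_ac\<close>)+
  moreover have "card {p \<otimes> q, q \<otimes> w, w \<otimes> p} \<le> card {p, q, w}"
    using distinct by (simp add: card_insert_if)
  moreover have "{p \<otimes> q, q \<otimes> w, w \<otimes> p} \<subseteq> zd_star R"
    using zd_star_mult Z c nz by auto
  ultimately have "zd_improves R (S - {p, q, w} \<union> {p \<otimes> q, q \<otimes> w, w \<otimes> p}) S"
    by (intro zd_dominating_exchange[OF fin dom]) (use S c isol in auto)
  then show ?thesis ..
qed

lemma improvement_from_common_annihilator:
  assumes fin: "finite S" and dom: "zd_dominating R S"
    and p: "p \<in> zd_isolated R S" and q: "q \<in> S" "p \<noteq> q"
    and y: "y \<in> carrier R" "y \<noteq> \<zero>" "p \<otimes> y = \<zero>" "q \<otimes> y = \<zero>"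
  shows "\<exists>S'. zd_improves R S' S"
proof -
  have pS: "p \<in> S" and pq: "p \<otimes> q \<noteq> \<zero>"
    using p q unfolding zd_isolated_def by auto
  have Z: "p \<in> zd_star R"
    using pS dom unfolding zd_dominating_iff by auto
  have c: "p \<in> carrier R" "q \<in> carrier R"
    using pS q dom zd_star_subset_carrier unfolding zd_dominating_iff by auto
  have pqy: "(p \<otimes> q) \<otimes> y = \<zero>" "y \<otimes> (p \<otimes> q) = \<zero>"
    using y c by (metis m_assoc m_comm r_null m_closed)+
  have "zd_improves R (S - {p, q} \<union> {p \<otimes> q, y}) S"
  proof (rule zd_dominating_exchange[OF fin dom])
    show "{p \<otimes> q, y} \<subseteq> zd_star R"
      using zd_star_mult[OF Z c(2) pq] zd_star_annihilator[OF Z y(1-3)] by auto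
    show "card {p \<otimes> q, y} \<le> card {p, q}"
      using q by (simp add: card_insert_if)
    show "\<forall>r \<in> {p, q}. \<exists>a \<in> {p \<otimes> q, y}. \<exists>c \<in> carrier R. a = r \<otimes> c"
      using c m_comm[OF c] by blast
    show "\<forall>r \<in> {p, q}. \<exists>u \<in> S - {p, q} \<union> {p \<otimes> q, y}. r \<otimes> u = \<zero>"
      using y by blast
    show "\<forall>a \<in> {p \<otimes> q, y}. \<exists>u \<in> S - {p, q} \<union> {p \<otimes> q, y}. a \<otimes> u = \<zero>"
      using pqy by blast
  qed (use pS q p in auto)
  then show ?thesis ..
qed

lemma unimprovable_isolated_mult_closed:
  assumes fin: "finite S" and dom: "zd_dominating R S"
    and all_isol: "zd_isolated R S = S" and opt: "\<nexists>S'. zd_improves R S' S"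
    and p: "p \<in> S" and q: "q \<in> S"
  shows "p \<otimes> q \<in> S"
proof (rule ccontr)
  assume pq: "p \<otimes> q \<notin> S"
  have c: "p \<in> carrier R" "q \<in> carrier R"
    using p q dom zd_star_subset_carrier unfolding zd_dominating_iff by auto
  have isol: "\<And>x. x \<in> S \<Longrightarrow> x \<in> zd_isolated R S" and nz: "\<And>x u. x \<in> S \<Longrightarrow> u \<in> S \<Longrightarrow> x \<otimes> u \<noteq> \<zero>"
    using all_isol unfolding zd_isolated_def by blast+
  have "p \<otimes> q \<in> zd_star R"
    using zd_star_mult[of p q] p q c dom nz unfolding zd_dominating_iff by auto
  then obtain w where w: "w \<in> S" "p \<otimes> q \<otimes> w = \<zero>"
    using dom pq unfolding zd_dominating_iff by auto
  have square: "\<exists>S'. zd_improves R S' S" if "x \<in> S" "z \<in> S" "x \<otimes> x \<otimes> z = \<zero>" for x z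
    using improvement_from_square_product[OF fin dom isol[OF \<open>x \<in> S\<close>], of z] that nz dom zd_star_subset_carrier
    unfolding zd_dominating_iff by blast
  consider "p = q" | "w = p" | "w = q" | "p \<noteq> q" "w \<noteq> p" "w \<noteq> q"
    by blast
  then show False
  proof cases
    case 1
    then show False using square[of p w] w p opt by blast
  next
    case 2
    then have "p \<otimes> p \<otimes> q = \<zero>" using w c by (simp add: m_ac)
    then show False using square[of p q] p q opt by blast
  next
    case 3
    then have "q \<otimes> q \<otimes> p = \<zero>" using w c by (simp add: m_ac)
    then show False using square[of q p] p q opt by blast
  next
    case 4
    then show False
      using improvement_from_triple_product[OF fin dom isol[OF p] isol[OF q] isol[OF \<open>w \<in> S\<close>]] w opt by blast
  qed
qed

lemma unimprovable_isolated_singleton: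
  assumes fin: "finite S" and dom: "zd_dominating R S"
    and all_isol: "zd_isolated R S = S" and opt: "\<nexists>S'. zd_improves R S' S"
    and b: "b \<in> S"
  shows "S = {b} \<and> b \<otimes> b = b"
proof -
  have SZ: "S \<subseteq> zd_star R"
    using dom unfolding zd_dominating_iff by auto
  have absorb: "p \<otimes> q = p" if p: "p \<in> S" and q: "q \<in> S" for p q
  proof (rule ccontr)
    assume ne: "p \<otimes> q \<noteq> p"
    have c: "p \<in> carrier R" "q \<in> carrier R"
      using p q SZ zd_star_subset_carrier by auto
    obtain y where y: "y \<in> carrier R" "y \<noteq> \<zero>" "p \<otimes> y = \<zero>"
      using zd_starD(3)[of p] p SZ by auto
    have "p \<otimes> q \<otimes> y = \<zero>"
      using y c by (metis m_assoc m_comm r_null)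
    moreover have "p \<otimes> q \<in> zd_isolated R S"
      using unimprovable_isolated_mult_closed[OF fin dom all_isol opt p q] all_isol by simp
    ultimately show False
      using improvement_from_common_annihilator[OF fin dom, of "p \<otimes> q" p y] p ne y opt by blast
  qed
  have "q = b" if "q \<in> S" for q
    using absorb[OF b that] absorb[OF that b] b that SZ zd_star_subset_carrier
    by (metis m_comm subsetD)
  then show ?thesis
    using absorb[OF b b] b by blast
qed

lemma exists_improvement:
  assumes fin: "finite S" and dom: "zd_dominating R S"
    and isolated: "zd_isolated R S \<noteq> {}" and not_idem: "\<nexists>e. S = {e} \<and> e \<otimes> e = e"
  shows "\<exists>S'. zd_improves R S' S"
proof -
  obtain b where b: "b \<in> zd_isolated R S"
    using isolated by auto
  show ?thesis
  proof (cases "zd_isolated R S = S")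
    case True
    show ?thesis
      using unimprovable_isolated_singleton[OF fin dom True] b True not_idem by blast
  next
    case False
    then obtain s where "s \<in> S" "s \<notin> zd_isolated R S"
      unfolding zd_isolated_def by blast
    then show ?thesis
      using improvement_from_nonisolated[OF fin dom b] by blast
  qed
qed

lemma exists_total_dominating_le:
  assumes no_dom_idem: "\<And>e. e \<otimes> e = e \<Longrightarrow> \<not> zd_dominating R {e}"
  shows "finite S \<Longrightarrow> zd_dominating R S \<Longrightarrow>
    \<exists>T. finite T \<and> zd_total_dominating R T \<and> card T \<le> card S"
proof (induction "card (zd_isolated R S)" arbitrary: S rule: less_induct)
  case less
  show ?case
  proof (cases "zd_isolated R S = {}")
    case True
    then show ?thesis
      using less.prems zd_total_dominating_iff by blast
  next
    case False
    have "\<nexists>e. S = {e} \<and> e \<otimes> e = e"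
      using no_dom_idem less.prems(2) by blast
    then obtain S' where S': "zd_improves R S' S"
      using exists_improvement[OF less.prems False] by blast
    have "finite (zd_isolated R S)"
      using less.prems(1) unfolding zd_isolated_def by auto
    then have "card (zd_isolated R S') < card (zd_isolated R S)"
      using S' unfolding zd_improves_def by (blast intro: psubset_card_mono)
    then show ?thesis
      using less.hyps[of S'] S' unfolding zd_improves_def by (meson le_trans)
  qed
qed

end

text \<open>For an idempotent e this is the ideal (1 - e)R, a ring with unit 1 - e.\<close>
definition annihilator_ring :: "('a, 'b) ring_scheme \<Rightarrow> 'a \<Rightarrow> 'a ring" where
  "annihilator_ring R e =
     \<lparr>carrier = {x \<in> carrier R. x \<otimes>\<^bsub>R\<^esub> e = \<zero>\<^bsub>R\<^esub>}, monoid.mult = monoid.mult R,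
      one = \<one>\<^bsub>R\<^esub> \<ominus>\<^bsub>R\<^esub> e, ring.zero = \<zero>\<^bsub>R\<^esub>, ring.add = ring.add R\<rparr>"

lemma annihilator_ring_simps:
  "carrier (annihilator_ring R e) = {x \<in> carrier R. x \<otimes>\<^bsub>R\<^esub> e = \<zero>\<^bsub>R\<^esub>}"
  "monoid.mult (annihilator_ring R e) = monoid.mult R"
  "one (annihilator_ring R e) = \<one>\<^bsub>R\<^esub> \<ominus>\<^bsub>R\<^esub> e"
  "\<zero>\<^bsub>annihilator_ring R e\<^esub> = \<zero>\<^bsub>R\<^esub>"
  "ring.add (annihilator_ring R e) = ring.add R"
  by (simp_all add: annihilator_ring_def)

context cring
begin

lemma zd_dominating_singleton_iff:
  "zd_dominating R {e} \<longleftrightarrow> e \<in> zd_star R \<and> (\<forall>v \<in> zd_star R. v \<noteq> e \<longrightarrow> v \<otimes> e = \<zero>)"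
  unfolding zd_dominating_iff by auto

lemma zd_star_one_minus_nonzero:
  assumes "x \<in> zd_star R"
  shows "\<one> \<ominus> x \<noteq> \<zero>"
proof
  assume "\<one> \<ominus> x = \<zero>"
  moreover have "x = \<one> \<ominus> (\<one> \<ominus> x)"
    using zd_starD(1)[OF assms] by algebra
  ultimately have "x = \<one>"
    by simp
  then show False
    using zd_starD(3)[OF assms] by simp
qed

lemma idempotent_complement:
  assumes e: "e \<in> carrier R" "e \<otimes> e = e"
  shows "\<one> \<ominus> e \<in> carrier R" "e \<otimes> (\<one> \<ominus> e) = \<zero>"
    and "(\<one> \<ominus> e) \<otimes> (\<one> \<ominus> e) = \<one> \<ominus> e"
    and "x \<in> carrier R \<Longrightarrow> (\<one> \<ominus> e) \<otimes> x = x \<ominus> e \<otimes> x"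
proof -
  show "\<one> \<ominus> e \<in> carrier R"
    using e by simp
  show "x \<in> carrier R \<Longrightarrow> (\<one> \<ominus> e) \<otimes> x = x \<ominus> e \<otimes> x"
    using e(1) by algebra
  have "e \<otimes> (\<one> \<ominus> e) = e \<ominus> e \<otimes> e" "(\<one> \<ominus> e) \<otimes> (\<one> \<ominus> e) = \<one> \<ominus> e \<oplus> (e \<otimes> e \<ominus> e)"
    using e(1) by algebra+
  then show "e \<otimes> (\<one> \<ominus> e) = \<zero>" "(\<one> \<ominus> e) \<otimes> (\<one> \<ominus> e) = \<one> \<ominus> e"
    using e by (simp_all add: r_neg)
qed

lemma annihilator_ring_cring:
  assumes e: "e \<in> carrier R" "e \<otimes> e = e"
  shows "cring (annihilator_ring R e)"
proof -
  note compl = idempotent_complement[OF e]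
  have ann: "e \<otimes> x = \<zero>" if "x \<in> carrier R" "x \<otimes> e = \<zero>" for x
    using that e by (simp add: m_comm)
  have ag: "abelian_group (annihilator_ring R e)"
  proof (rule abelian_groupI)
    fix x assume x: "x \<in> carrier (annihilator_ring R e)"
    show "\<exists>y \<in> carrier (annihilator_ring R e).
            y \<oplus>\<^bsub>annihilator_ring R e\<^esub> x = \<zero>\<^bsub>annihilator_ring R e\<^esub>"
    proof
      show "\<ominus> x \<in> carrier (annihilator_ring R e)"
        using x e by (simp add: annihilator_ring_simps l_minus)
    qed (use x in \<open>simp add: annihilator_ring_simps l_neg\<close>)
  qed (use e in \<open>auto simp: annihilator_ring_simps l_distr a_ac\<close>)
  have cm: "comm_monoid (annihilator_ring R e)"
  proof (rule comm_monoidI)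
    fix x y assume "x \<in> carrier (annihilator_ring R e)" "y \<in> carrier (annihilator_ring R e)"
    then show "x \<otimes>\<^bsub>annihilator_ring R e\<^esub> y \<in> carrier (annihilator_ring R e)"
      using e by (simp add: annihilator_ring_simps m_assoc)
  next
    fix x assume "x \<in> carrier (annihilator_ring R e)"
    then show "\<one>\<^bsub>annihilator_ring R e\<^esub> \<otimes>\<^bsub>annihilator_ring R e\<^esub> x = x"
      using compl(4) ann by (simp add: annihilator_ring_simps a_minus_def)
  next
    show "\<one>\<^bsub>annihilator_ring R e\<^esub> \<in> carrier (annihilator_ring R e)"
      using compl(1,2) e by (simp add: annihilator_ring_simps m_comm)
  qed (auto simp: annihilator_ring_simps m_ac)
  show ?thesis
    by (rule cringI[OF ag cm]) (auto simp: annihilator_ring_simps l_distr)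
qed

lemma dominating_idempotent_mult_cases:
  assumes dom: "zd_dominating R {e}" and idem: "e \<otimes> e = e" and r: "r \<in> carrier R"
  shows "e \<otimes> r = \<zero> \<or> e \<otimes> r = e"
proof (rule ccontr)
  assume n: "\<not> ?thesis"
  have eZ: "e \<in> zd_star R" and annihilates_e: "\<forall>v \<in> zd_star R. v \<noteq> e \<longrightarrow> v \<otimes> e = \<zero>"
    using dom zd_dominating_singleton_iff by auto
  have ec: "e \<in> carrier R"
    using zd_starD(1)[OF eZ] .
  note compl = idempotent_complement[OF ec idem]
  have "\<one> \<ominus> e \<noteq> \<zero>"
    using zd_star_one_minus_nonzero[OF eZ] .
  moreover have "(e \<otimes> r) \<otimes> (\<one> \<ominus> e) = r \<otimes> (e \<otimes> (\<one> \<ominus> e))"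
    using r ec compl(1) by (simp add: m_ac)
  ultimately have "e \<otimes> r \<in> zd_star R"
    using zd_starI[of "e \<otimes> r" "\<one> \<ominus> e"] compl r ec n by simp
  then have "e \<otimes> r \<otimes> e = \<zero>"
    using annihilates_e n by auto
  moreover have "e \<otimes> r \<otimes> e = e \<otimes> r"
    using r ec idem by (metis m_assoc m_comm)
  ultimately show False
    using n by simp
qed

lemma dominating_idempotent_add_self:
  assumes dom: "zd_dominating R {e}" and idem: "e \<otimes> e = e"
  shows "e \<oplus> e = \<zero>"
proof -
  have ec: "e \<in> carrier R" and e0: "e \<noteq> \<zero>"
    using dom zd_dominating_singleton_iff zd_starD by auto
  have "e \<oplus> e = e \<otimes> (\<one> \<oplus> \<one>)"
    using ec by (simp add: r_distr)
  then have "e \<oplus> e = \<zero> \<or> e \<oplus> e = e"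
    using dominating_idempotent_mult_cases[OF dom idem] by simp
  moreover have "e \<oplus> e \<noteq> e"
    using ec e0 by (metis add.l_cancel r_zero zero_closed)
  ultimately show ?thesis
    by simp
qed

text \<open>If ab = 0 in the annihilator ring with a \<noteq> 0, then e + a is a
  zero-divisor different from e that does not annihilate e.\<close>
lemma annihilator_ring_domain:
  assumes dom: "zd_dominating R {e}" and idem: "e \<otimes> e = e"
  shows "domain (annihilator_ring R e)"
proof -
  have eZ: "e \<in> zd_star R" and annihilates_e: "\<forall>v \<in> zd_star R. v \<noteq> e \<longrightarrow> v \<otimes> e = \<zero>"
    using dom zd_dominating_singleton_iff by auto
  have ec: "e \<in> carrier R" and e0: "e \<noteq> \<zero>"
    using zd_starD[OF eZ] by auto
  show ?thesis
  proof (rule domainI[OF annihilator_ring_cring[OF ec idem]], unfold annihilator_ring_simps)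
    show "\<one> \<ominus> e \<noteq> \<zero>"
      using zd_star_one_minus_nonzero[OF eZ] .
  next
    fix a b
    assume ab: "a \<otimes> b = \<zero>" "a \<in> {x \<in> carrier R. x \<otimes> e = \<zero>}" "b \<in> {x \<in> carrier R. x \<otimes> e = \<zero>}"
    then have c: "a \<in> carrier R" "b \<in> carrier R" and be: "e \<otimes> b = \<zero>"
      using ec by (auto simp: m_comm)
    show "a = \<zero> \<or> b = \<zero>"
    proof (rule ccontr)
      assume n: "\<not> (a = \<zero> \<or> b = \<zero>)"
      have wc: "e \<oplus> a \<in> carrier R"
        using ec c by simp
      have "(e \<oplus> a) \<otimes> e = e"
        using ec c ab idem by (simp add: l_distr)
      moreover have "(e \<oplus> a) \<otimes> b = \<zero>"
        using ec c ab be by (simp add: l_distr)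
      moreover have "e \<oplus> a \<noteq> e"
        using ec c n by (metis add.l_cancel r_zero zero_closed)
      moreover have "e \<oplus> a \<noteq> \<zero>"
        using calculation(1) ec e0 by auto
      ultimately have "e \<oplus> a \<in> zd_star R" and "e \<oplus> a \<noteq> e" and "(e \<oplus> a) \<otimes> e \<noteq> \<zero>"
        using zd_starI[OF wc c(2)] e0 n by auto
      then show False
        using annihilates_e by blast
    qed
  qed
qed

end

lemma ZMod_ring_hom: "ZMod m \<in> ring_hom \<Z> (ZFact m)"
proof -
  have "ZMod m = (+>\<^bsub>\<Z>\<^esub>) (Idl\<^bsub>\<Z>\<^esub> {m})"
    by (rule ext) (simp add: ZMod_def)
  moreover have "ideal (Idl\<^bsub>\<Z>\<^esub> {m}) \<Z>"
    by (rule int.genideal_ideal) simp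
  ultimately show ?thesis
    unfolding ZFact_def using ideal.rcos_ring_hom by metis
qed

lemma ZMod_hom_simps:
  "ZMod m k \<in> carrier (ZFact m)"
  "ZMod m (a * b) = ZMod m a \<otimes>\<^bsub>ZFact m\<^esub> ZMod m b"
  "ZMod m (a + b) = ZMod m a \<oplus>\<^bsub>ZFact m\<^esub> ZMod m b"
  "ZMod m 1 = \<one>\<^bsub>ZFact m\<^esub>"
  using ring_hom_closed[OF ZMod_ring_hom, of k m] ring_hom_mult[OF ZMod_ring_hom, of a b m]
    ring_hom_add[OF ZMod_ring_hom, of a b m] ring_hom_one[OF ZMod_ring_hom, of m]
  by simp_all

lemma ZFact_carrier_ZMod: "Y \<in> carrier (ZFact m) \<Longrightarrow> \<exists>k. Y = ZMod m k"
  by (auto simp: ZFact_def FactRing_def A_RCOSETS_def RCOSETS_def ZMod_def a_r_coset_def)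

lemma RDirProd_simps:
  "(a, b) \<otimes>\<^bsub>RDirProd A B\<^esub> (c, d) = (a \<otimes>\<^bsub>A\<^esub> c, b \<otimes>\<^bsub>B\<^esub> d)"
  "(a, b) \<oplus>\<^bsub>RDirProd A B\<^esub> (c, d) = (a \<oplus>\<^bsub>A\<^esub> c, b \<oplus>\<^bsub>B\<^esub> d)"
  "\<one>\<^bsub>RDirProd A B\<^esub> = (\<one>\<^bsub>A\<^esub>, \<one>\<^bsub>B\<^esub>)"
  by (simp_all add: RDirProd_def DirProd_def monoid.defs)

text \<open>When eR = {0, e}, the first component identifies eR with the integers mod 2.\<close>
definition idempotent_split :: "('a, 'b) ring_scheme \<Rightarrow> 'a \<Rightarrow> 'a \<Rightarrow> int set \<times> 'a" where
  "idempotent_split R e r =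
     (ZMod 2 (of_bool (e \<otimes>\<^bsub>R\<^esub> r \<noteq> \<zero>\<^bsub>R\<^esub>)), (\<one>\<^bsub>R\<^esub> \<ominus>\<^bsub>R\<^esub> e) \<otimes>\<^bsub>R\<^esub> r)"

context cring
begin

lemma idempotent_split_ring_hom:
  assumes dom: "zd_dominating R {e}" and idem: "e \<otimes> e = e"
  shows "idempotent_split R e \<in> ring_hom R (RDirProd (ZFact 2) (annihilator_ring R e))"
proof -
  have ec: "e \<in> carrier R" and e0: "e \<noteq> \<zero>"
    using dom zd_dominating_singleton_iff zd_starD by auto
  note compl = idempotent_complement[OF ec idem]
  note mult_cases = dominating_idempotent_mult_cases[OF dom idem]
  show ?thesis
  proof (rule ring_hom_memI)
    fix x assume x: "x \<in> carrier R"
    have "(\<one> \<ominus> e) \<otimes> x \<otimes> e = x \<otimes> (e \<otimes> (\<one> \<ominus> e))"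
      using x ec compl(1) by (simp add: m_ac)
    then show "idempotent_split R e x \<in> carrier (RDirProd (ZFact 2) (annihilator_ring R e))"
      unfolding idempotent_split_def RDirProd_carrier annihilator_ring_simps
      using ZMod_hom_simps(1) compl(1,2) x by simp
  next
    fix x y assume xy: "x \<in> carrier R" "y \<in> carrier R"
    have "e \<otimes> (x \<otimes> y) = (e \<otimes> x) \<otimes> (e \<otimes> y)"
      and "(\<one> \<ominus> e) \<otimes> (x \<otimes> y) = ((\<one> \<ominus> e) \<otimes> x) \<otimes> ((\<one> \<ominus> e) \<otimes> y)"
      using xy ec idem compl(1,3) by (metis m_ac(1,2) m_closed)+
    moreover have "of_bool ((e \<otimes> x) \<otimes> (e \<otimes> y) \<noteq> \<zero>) =
        of_bool (e \<otimes> x \<noteq> \<zero>) * (of_bool (e \<otimes> y \<noteq> \<zero>) :: int)"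
      using mult_cases[OF xy(1)] mult_cases[OF xy(2)] idem e0 ec by auto
    ultimately show "idempotent_split R e (x \<otimes> y) =
        idempotent_split R e x \<otimes>\<^bsub>RDirProd (ZFact 2) (annihilator_ring R e)\<^esub> idempotent_split R e y"
      unfolding idempotent_split_def RDirProd_simps
      by (simp add: annihilator_ring_simps ZMod_hom_simps(2))
  next
    fix x y assume xy: "x \<in> carrier R" "y \<in> carrier R"
    have "e \<otimes> (x \<oplus> y) = e \<otimes> x \<oplus> e \<otimes> y"
      using xy ec by (simp add: r_distr)
    then have "ZMod 2 (of_bool (e \<otimes> (x \<oplus> y) \<noteq> \<zero>)) =
        ZMod 2 (of_bool (e \<otimes> x \<noteq> \<zero>) + of_bool (e \<otimes> y \<noteq> \<zero>))"
      unfolding ZMod_eq_mod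
      using mult_cases[OF xy(1)] mult_cases[OF xy(2)] dominating_idempotent_add_self[OF dom idem] e0 ec by auto
    moreover have "(\<one> \<ominus> e) \<otimes> (x \<oplus> y) = (\<one> \<ominus> e) \<otimes> x \<oplus> (\<one> \<ominus> e) \<otimes> y"
      using xy compl(1) by (simp add: r_distr)
    ultimately show "idempotent_split R e (x \<oplus> y) =
        idempotent_split R e x \<oplus>\<^bsub>RDirProd (ZFact 2) (annihilator_ring R e)\<^esub> idempotent_split R e y"
      unfolding idempotent_split_def RDirProd_simps annihilator_ring_simps
      by (simp only: prod.inject simp_thms ZMod_hom_simps(3))
  next
    show "idempotent_split R e \<one> = \<one>\<^bsub>RDirProd (ZFact 2) (annihilator_ring R e)\<^esub>"
      unfolding idempotent_split_def RDirProd_simps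
      using ZMod_hom_simps(4) compl(1) ec e0 by (simp add: annihilator_ring_simps)
  qed
qed

lemma idempotent_split_bij:
  assumes dom: "zd_dominating R {e}" and idem: "e \<otimes> e = e"
  shows "bij_betw (idempotent_split R e) (carrier R) (carrier (RDirProd (ZFact 2) (annihilator_ring R e)))"
proof -
  have ec: "e \<in> carrier R" and e0: "e \<noteq> \<zero>"
    using dom zd_dominating_singleton_iff zd_starD by auto
  note compl = idempotent_complement[OF ec idem]
  note mult_cases = dominating_idempotent_mult_cases[OF dom idem]
  have decomp: "x = e \<otimes> x \<oplus> (\<one> \<ominus> e) \<otimes> x" if "x \<in> carrier R" for x
    using that ec by algebra
  have "inj_on (idempotent_split R e) (carrier R)"
  proof (rule inj_onI)
    fix x y assume x: "x \<in> carrier R" and y: "y \<in> carrier R"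
      and eq: "idempotent_split R e x = idempotent_split R e y"
    then have "ZMod 2 (of_bool (e \<otimes> x \<noteq> \<zero>)) = ZMod 2 (of_bool (e \<otimes> y \<noteq> \<zero>))"
      unfolding idempotent_split_def by (simp only: prod.inject)
    then have "(of_bool (e \<otimes> x \<noteq> \<zero>) :: int) mod 2 = of_bool (e \<otimes> y \<noteq> \<zero>) mod 2"
      by (rule ZMod_imp_zmod)
    then have "e \<otimes> x = e \<otimes> y"
      using mult_cases[OF x] mult_cases[OF y] by auto
    moreover have "(\<one> \<ominus> e) \<otimes> x = (\<one> \<ominus> e) \<otimes> y"
      using eq unfolding idempotent_split_def by simp
    ultimately show "x = y"
      using decomp[OF x] decomp[OF y] by simp
  qed
  moreover have "carrier (RDirProd (ZFact 2) (annihilator_ring R e)) \<subseteq> idempotent_split R e ` carrier R"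
  proof
    fix p assume "p \<in> carrier (RDirProd (ZFact 2) (annihilator_ring R e))"
    then obtain k d where p: "p = (ZMod 2 k, d)" and d: "d \<in> carrier R" "d \<otimes> e = \<zero>"
      unfolding RDirProd_carrier annihilator_ring_simps using ZFact_carrier_ZMod by fastforce
    have ed: "e \<otimes> d = \<zero>" and fd: "(\<one> \<ominus> e) \<otimes> d = d"
      using d ec compl(4)[OF d(1)] by (simp_all add: m_comm a_minus_def)
    have "(\<one> \<ominus> e) \<otimes> (e \<oplus> d) = e \<otimes> (\<one> \<ominus> e) \<oplus> (\<one> \<ominus> e) \<otimes> d"
      using ec d(1) by algebra
    then have "(\<one> \<ominus> e) \<otimes> (e \<oplus> d) = d"
      using compl(2) fd d(1) by simp
    moreover have "e \<otimes> (e \<oplus> d) = e"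
      using ec d(1) idem ed by (simp add: r_distr)
    ultimately have "idempotent_split R e (e \<oplus> d) = (ZMod 2 1, d)" "idempotent_split R e d = (ZMod 2 0, d)"
      unfolding idempotent_split_def using ed fd e0 by simp_all
    moreover have "ZMod 2 k = ZMod 2 1 \<or> ZMod 2 k = ZMod 2 0"
      unfolding ZMod_eq_mod by presburger
    ultimately show "p \<in> idempotent_split R e ` carrier R"
      using p d(1) ec by (metis add.m_closed image_eqI)
  qed
  ultimately show ?thesis
    unfolding bij_betw_def using ring_hom_closed[OF idempotent_split_ring_hom[OF dom idem]] by auto
qed

lemma dominating_idempotent_iso:
  assumes "zd_dominating R {e}" and "e \<otimes> e = e"
  shows "R \<simeq> RDirProd (ZFact 2) (annihilator_ring R e)"
  using idempotent_split_ring_hom[OF assms] idempotent_split_bij[OF assms]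
  unfolding is_ring_iso_def ring_iso_def by blast

end

theorem theorem4p3:
  fixes R :: "('a, 'b) ring_scheme"
  assumes "cring R"
    and "\<not> domain R"
    and "zd_gamma_t R < \<infinity>"
    and "\<not> (\<exists>D :: 'a ring. domain D \<and> R \<simeq> RDirProd (ZFact 2) D)"
  shows "zd_gamma_t R = zd_gamma R"
proof -
  interpret cring R by (rule assms(1))
  have no_dominating_idempotent: "\<not> zd_dominating R {e}" if "e \<otimes>\<^bsub>R\<^esub> e = e" for e
    using annihilator_ring_domain[OF _ that] dominating_idempotent_iso[OF _ that] assms(4) by blast
  have "zd_gamma R < \<infinity>"
    using zd_gamma_le_gamma_t assms(3) by (rule le_less_trans)
  then obtain S where S: "finite S" "zd_dominating R S" "zd_gamma R = enat (card S)"
    by (rule zd_gamma_attained)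
  obtain T where "finite T" "zd_total_dominating R T" "card T \<le> card S"
    using exists_total_dominating_le[OF no_dominating_idempotent S(1,2)] by blast
  then have "zd_gamma_t R \<le> zd_gamma R"
    using zd_gamma_t_le_card S(3) by (metis enat_ord_simps(1) order_trans)
  then show ?thesis
    using zd_gamma_le_gamma_t by (rule antisym)
qed

end
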